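(* Let $(J,S)$ be a homogeneous $d$-dimensional multi-time Markov renewal chain with semi-Markov kernel $q$, and let $1\le u<v\le d$. Define $Y_0=0$, $Y_{n+1}=X^{[u]}_{n+1}\cdot X^{[v]}_{n+1}$ and $S^{[y]}_n=\sum_{k=0}^nY_k$. Then $(J,S^{[y]})$ is a Markov renewal chain with interjump times $(Y_n)_{n\ge1}$ and semi-Markov kernel $$q^{[y]}_{ij}(k)=\sum_{k_{1:d}\in\mathbb{N}^d:\ k_u\cdot k_v=k}q_{ij}(k_{1:d}),\qquad i,j\in E,\ k\in\mathbb{N}.$$
   Context: $E=\{1,\dots,s\}$. $\mathbb{N}^d$ carries the partial order $k\le l$ iff $k_u\le l_u$ for all $u$, and $k<l$ iff $k\le l$, $k\ne l$. A homogeneous $d$-dimensional multi-time Markov renewal chain is a process $(J_n,S_n)_{n\in\mathbb{N}}$, $J_n\in E$, $S_n\in\mathbb{N}^d$, $S_0=0_d$, $S_n<S_{n+1}$, such that a.s. $\mathbb{P}(J_{n+1}=j,S_{n+1}-S_n=k\mid J_{0:n},S_{0:n})=q_{J_nj}(k)$ with $q_{ij}(k)=\mathbb{P}(J_{n+1}=j,S_{n+1}-S_n=k\mid J_n=i)$ independent of $n$. Sojourn times $X_0=0_d$, $X_n=S_n-S_{n-1}$, with $u$-th coordinate $X^{[u]}_n$. "Markov renewal chain with kernel $q^{[y]}$" means $\mathbb{P}(J_{n+1}=j,S^{[y]}_{n+1}-S^{[y]}_n=k\mid J_{0:n},S^{[y]}_{0:n})=q^{[y]}_{J_nj}(k)$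 a.s. *)

theory Defs
  imports "HOL-Probability.Probability"
begin

text \<open>Vectors of \<open>\<nat>\<^sup>d\<close> are represented as functions \<open>nat \<Rightarrow> nat\<close> with coordinates
  indexed by \<open>{1..d}\<close> and vanishing outside \<open>{1..d}\<close>.  On such functions the pointwise
  order \<open>\<le>\<close>/\<open><\<close> of HOL is exactly the partial order of the paper.\<close>

definition NatVec :: "nat \<Rightarrow> (nat \<Rightarrow> nat) set" where
  "NatVec d = {k. \<forall>i. (i < 1 \<or> d < i) \<longrightarrow> k i = 0}"

definition hist_event :: "'w measure \<Rightarrow> (nat \<Rightarrow> 'w \<Rightarrow> nat) \<Rightarrow> (nat \<Rightarrow> 'w \<Rightarrow> 'b)
    \<Rightarrow> nat \<Rightarrow> (nat \<Rightarrow> nat) \<Rightarrow> (nat \<Rightarrow> 'b) \<Rightarrow> 'w set" where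
  "hist_event M J S n js ss = {\<omega> \<in> space M. \<forall>m\<le>n. J m \<omega> = js m \<and> S m \<omega> = ss m}"

text \<open>Since all variables are discrete, the a.s. conditional probability identity is expressed
  in the elementary form P(A \<inter> H) = q * P(H) for every history event H (trivial if P(H)=0).\<close>
definition MTMRC :: "'w measure \<Rightarrow> nat \<Rightarrow> nat \<Rightarrow> (nat \<Rightarrow> 'w \<Rightarrow> nat) \<Rightarrow> (nat \<Rightarrow> 'w \<Rightarrow> (nat \<Rightarrow> nat))
    \<Rightarrow> (nat \<Rightarrow> nat \<Rightarrow> (nat \<Rightarrow> nat) \<Rightarrow> real) \<Rightarrow> bool" where
  "MTMRC M d s J S q \<longleftrightarrow>
     prob_space M \<and>
     (\<forall>n. J n \<in> measurable M (count_space UNIV)) \<and>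
     (\<forall>n. S n \<in> measurable M (count_space UNIV)) \<and>
     (\<forall>n. \<forall>\<omega>\<in>space M. J n \<omega> \<in> {1..s}) \<and>
     (\<forall>n. \<forall>\<omega>\<in>space M. S n \<omega> \<in> NatVec d) \<and>
     (\<forall>\<omega>\<in>space M. S 0 \<omega> = (\<lambda>i. 0)) \<and>
     (\<forall>n. \<forall>\<omega>\<in>space M. S n \<omega> < S (Suc n) \<omega>) \<and>
     (\<forall>n j k js ss.
        measure M ({\<omega> \<in> space M. J (Suc n) \<omega> = j \<and> (\<lambda>i. S (Suc n) \<omega> i - S n \<omega> i) = k}
                    \<inter> hist_event M J S n js ss)
        = q (js n) j k * measure M (hist_event M J S n js ss))"

text \<open>(One-dimensional) Markov renewal chain with kernel qy, as in the context: only the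
  Markov/kernel property is required.\<close>
definition MRC_kernel :: "'w measure \<Rightarrow> (nat \<Rightarrow> 'w \<Rightarrow> nat) \<Rightarrow> (nat \<Rightarrow> 'w \<Rightarrow> nat)
    \<Rightarrow> (nat \<Rightarrow> nat \<Rightarrow> nat \<Rightarrow> real) \<Rightarrow> bool" where
  "MRC_kernel M J T qy \<longleftrightarrow>
     (\<forall>n j k js ts.
        measure M ({\<omega> \<in> space M. J (Suc n) \<omega> = j \<and> T (Suc n) \<omega> - T n \<omega> = k}
                    \<inter> hist_event M J T n js ts)
        = qy (js n) j k * measure M (hist_event M J T n js ts))"

definition sojourn :: "(nat \<Rightarrow> 'w \<Rightarrow> (nat \<Rightarrow> nat)) \<Rightarrow> nat \<Rightarrow> 'w \<Rightarrow> (nat \<Rightarrow> nat)" where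
  "sojourn S n \<omega> = (if n = 0 then (\<lambda>i. 0) else (\<lambda>i. S n \<omega> i - S (n - 1) \<omega> i))"

definition prodY :: "(nat \<Rightarrow> 'w \<Rightarrow> (nat \<Rightarrow> nat)) \<Rightarrow> nat \<Rightarrow> nat \<Rightarrow> nat \<Rightarrow> 'w \<Rightarrow> nat" where
  "prodY S u v n \<omega> = (if n = 0 then 0 else sojourn S n \<omega> u * sojourn S n \<omega> v)"

definition Sy :: "(nat \<Rightarrow> 'w \<Rightarrow> (nat \<Rightarrow> nat)) \<Rightarrow> nat \<Rightarrow> nat \<Rightarrow> nat \<Rightarrow> 'w \<Rightarrow> nat" where
  "Sy S u v n \<omega> = (\<Sum>k\<le>n. prodY S u v k \<omega>)"

definition qy :: "nat \<Rightarrow> (nat \<Rightarrow> nat \<Rightarrow> (nat \<Rightarrow> nat) \<Rightarrow> real) \<Rightarrow> nat \<Rightarrow> nat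
    \<Rightarrow> nat \<Rightarrow> nat \<Rightarrow> nat \<Rightarrow> real" where
  "qy d q u v i j k = infsum (q i j) {kv \<in> NatVec d. kv u * kv v = k}"

end

(* Conditioned on a history of (J, S^[y]) up to time n, one is conditioning on a countable
   disjoint union of histories of (J, S): S^[y]_m depends only on S_0, ..., S_m, and S takes
   values in the countable set N^d.  All these histories end in the same state J_n, so the
   kernel identity of (J, S) survives the union by countable additivity.  Likewise the event
   Y_{n+1} = k is the disjoint union of the events X_{n+1} = k_{1:d} over k_u k_v = k, and
   summing q over these increments gives q^[y]. *)

theory Submission
  imports Defs
begin

lemma countable_NatVec: "countable (NatVec d)"
proof (rule countable_subset)
  show "NatVec d \<subseteq> (\<lambda>f i. if i \<in> {1..d} then f i else 0) ` (PiE {1..d} (\<lambda>_. UNIV))"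
  proof
    fix k assume "k \<in> NatVec d"
    then have "k = (\<lambda>i. if i \<in> {1..d} then restrict k {1..d} i else 0)"
      by (auto simp: NatVec_def fun_eq_iff not_le)
    then show "k \<in> (\<lambda>f i. if i \<in> {1..d} then f i else 0) ` (PiE {1..d} (\<lambda>_. UNIV))"
      by (intro image_eqI) auto
  qed
qed (auto intro: countable_PiE)

lemma measurable_pair_countable_valued:
  assumes "f \<in> M \<rightarrow>\<^sub>M count_space UNIV" "g \<in> M \<rightarrow>\<^sub>M count_space UNIV"
    and "countable C" "f \<in> space M \<rightarrow> C" "g \<in> space M \<rightarrow> C"
  shows "(\<lambda>\<omega>. (f \<omega>, g \<omega>)) \<in> M \<rightarrow>\<^sub>M count_space (C \<times> C)"
proof -
  have "(\<lambda>\<omega>. (f \<omega>, g \<omega>)) -` {(a, b)} \<inter> space M = (f -` {a} \<inter> space M) \<inter> (g -` {b} \<inter> space M)"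
    for a b by auto
  then show ?thesis
    using assms by (auto simp: measurable_count_space_eq_countable intro!: sets.Int measurable_sets)
qed

lemma (in finite_measure) has_sum_measure_disjoint_UN:
  assumes "countable I" "F ` I \<subseteq> sets M" "disjoint_family_on F I"
  shows "((\<lambda>i. measure M (F i)) has_sum measure M (\<Union>i\<in>I. F i)) I"
proof -
  have "emeasure M (\<Union>i\<in>I. F i) = (\<integral>\<^sup>+i. ennreal (measure M (F i)) \<partial>count_space I)"
    using assms by (subst emeasure_UN_countable) (auto simp: emeasure_eq_measure intro!: nn_integral_cong)
  then have nn: "(\<integral>\<^sup>+i. ennreal (measure M (F i)) \<partial>count_space I) = ennreal (measure M (\<Union>i\<in>I. F i))"
    by (simp add: emeasure_eq_measure)
  then have "Infinite_Set_Sum.abs_summable_on (\<lambda>i. measure M (F i)) I"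
    unfolding Infinite_Set_Sum.abs_summable_on_def by (intro integrableI_nonneg) (auto simp: top.not_eq_extremum)
  moreover have "infsetsum (\<lambda>i. measure M (F i)) I = measure M (\<Union>i\<in>I. F i)"
    by (subst infsetsum_conv_nn_integral) (simp_all add: nn)
  ultimately show ?thesis
    by (metis has_sum_infsum infsetsum_infsum abs_summable_summable abs_summable_equivalent)
qed

lemma sets_hist_event:
  assumes "\<And>m. J m \<in> M \<rightarrow>\<^sub>M count_space UNIV" "\<And>m. S m \<in> M \<rightarrow>\<^sub>M count_space UNIV"
  shows "hist_event M J S n js ss \<in> sets M"
proof -
  have "hist_event M J S n js ss = space M \<inter> (\<Inter>m\<le>n. (J m -` {js m} \<inter> space M) \<inter> (S m -` {ss m} \<inter> space M))"
    by (auto simp: hist_event_def)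
  also have "\<dots> \<in> sets M"
    using assms by (intro sets.Int sets.finite_INT measurable_sets) auto
  finally show ?thesis .
qed

lemma disjoint_family_on_hist_event:
  "disjoint_family_on (hist_event M J S n js) (extensional {..n})"
  by (auto simp: disjoint_family_on_def hist_event_def intro!: extensionalityI)

lemma hist_event_eq_UN_hist_event_finer:
  assumes "\<And>m \<omega> \<omega>'. (\<And>l. l \<le> m \<Longrightarrow> S l \<omega> = S l \<omega>') \<Longrightarrow> T m \<omega> = T m \<omega>'"
  shows "hist_event M J T n js ts =
    (\<Union>ss \<in> (\<lambda>\<omega>. restrict (\<lambda>m. S m \<omega>) {..n}) ` hist_event M J T n js ts. hist_event M J S n js ss)"
  (is "?H = (\<Union>ss \<in> ?hist ` ?H. _)")
proof (intro equalityI subsetI)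
  fix \<omega> assume "\<omega> \<in> ?H"
  then show "\<omega> \<in> (\<Union>ss \<in> ?hist ` ?H. hist_event M J S n js ss)"
    by (auto simp: hist_event_def)
next
  fix \<omega>' assume "\<omega>' \<in> (\<Union>ss \<in> ?hist ` ?H. hist_event M J S n js ss)"
  then obtain \<omega> where \<omega>: "\<omega> \<in> ?H" and \<omega>': "\<omega>' \<in> hist_event M J S n js (?hist \<omega>)"
    by blast
  have "T m \<omega>' = T m \<omega>" if "m \<le> n" for m
    using \<omega>' that by (intro assms) (auto simp: hist_event_def)
  then show "\<omega>' \<in> ?H"
    using \<omega> \<omega>' by (auto simp: hist_event_def)
qed

lemma Sy_cong:
  assumes "\<And>l. l \<le> m \<Longrightarrow> S l \<omega> = S l \<omega>'"
  shows "Sy S u v m \<omega> = Sy S u v m \<omega>'"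
  unfolding Sy_def prodY_def sojourn_def using assms by (intro sum.cong) auto

lemma Sy_Suc_diff:
  "Sy S u v (Suc n) \<omega> - Sy S u v n \<omega> = sojourn S (Suc n) \<omega> u * sojourn S (Suc n) \<omega> v"
  by (simp add: Sy_def prodY_def)

lemma MTMRC_sojourn_in_NatVec:
  assumes "MTMRC M d s J S q" "\<omega> \<in> space M"
  shows "sojourn S n \<omega> \<in> NatVec d"
  using assms by (auto simp: MTMRC_def NatVec_def sojourn_def)

lemma MTMRC_sets_hist_event:
  assumes "MTMRC M d s J S q"
  shows "hist_event M J S n js ss \<in> sets M"
  using assms by (intro sets_hist_event) (auto simp: MTMRC_def)

lemma MTMRC_measurable_sojourn:
  assumes "MTMRC M d s J S q"
  shows "sojourn S (Suc n) \<in> M \<rightarrow>\<^sub>M count_space UNIV"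
proof -
  \<comment> \<open>A function of two maps measurable into \<open>count_space UNIV\<close> need not be measurable;
    it is once both maps take values in a countable set.\<close>
  have "(\<lambda>\<omega>. (S (Suc n) \<omega>, S n \<omega>)) \<in> M \<rightarrow>\<^sub>M count_space (NatVec d \<times> NatVec d)"
    using assms countable_NatVec by (intro measurable_pair_countable_valued) (auto simp: MTMRC_def)
  then have "(\<lambda>\<omega>. (\<lambda>(a, b) i. a i - b i) (S (Suc n) \<omega>, S n \<omega>)) \<in> M \<rightarrow>\<^sub>M count_space UNIV"
    by (rule measurable_compose) simp
  moreover have "sojourn S (Suc n) = (\<lambda>\<omega>. (\<lambda>(a, b) i. a i - b i) (S (Suc n) \<omega>, S n \<omega>))"
    by (simp add: fun_eq_iff sojourn_def)
  ultimately show ?thesis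
    by simp
qed

lemma MTMRC_kernel_UN_hist_event:
  assumes chain: "MTMRC M d s J S q" and B: "countable B" "B \<subseteq> extensional {..n}"
  shows "measure M ({\<omega> \<in> space M. J (Suc n) \<omega> = j \<and> sojourn S (Suc n) \<omega> = k} \<inter> (\<Union>ss\<in>B. hist_event M J S n js ss))
    = q (js n) j k * measure M (\<Union>ss\<in>B. hist_event M J S n js ss)"
    (is "measure M (?E \<inter> (\<Union>ss\<in>B. ?H ss)) = _")
proof -
  interpret prob_space M
    using chain by (simp add: MTMRC_def)
  have H: "?H ss \<in> sets M" for ss
    using chain by (rule MTMRC_sets_hist_event)
  have [measurable]: "J (Suc n) \<in> M \<rightarrow>\<^sub>M count_space UNIV"
    using chain by (simp add: MTMRC_def)
  note MTMRC_measurable_sojourn[OF chain, measurable]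
  have E: "?E \<in> sets M"
    by measurable
  have disj: "disjoint_family_on ?H B"
    using disjoint_family_on_hist_event B(2) by (rule disjoint_family_on_mono[rotated])
  have "((\<lambda>ss. measure M (?H ss)) has_sum measure M (\<Union>ss\<in>B. ?H ss)) B"
    using B(1) H disj by (intro has_sum_measure_disjoint_UN) auto
  then have "((\<lambda>ss. q (js n) j k * measure M (?H ss)) has_sum q (js n) j k * measure M (\<Union>ss\<in>B. ?H ss)) B"
    by (rule has_sum_cmult_right)
  moreover have "((\<lambda>ss. measure M (?E \<inter> ?H ss)) has_sum measure M (\<Union>ss\<in>B. ?E \<inter> ?H ss)) B"
    using B(1) H E disj by (intro has_sum_measure_disjoint_UN) (auto simp: disjoint_family_on_def)
  moreover have "measure M (?E \<inter> ?H ss) = q (js n) j k * measure M (?H ss)" for ss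
    using chain by (simp add: MTMRC_def sojourn_def)
  ultimately show ?thesis
    by (simp add: has_sum_unique)
qed

lemma MTMRC_kernel_UN_hist_event_increment_set:
  assumes chain: "MTMRC M d s J S q" and B: "countable B" "B \<subseteq> extensional {..n}"
    and K: "K \<subseteq> NatVec d"
  shows "measure M ({\<omega> \<in> space M. J (Suc n) \<omega> = j \<and> sojourn S (Suc n) \<omega> \<in> K} \<inter> (\<Union>ss\<in>B. hist_event M J S n js ss))
    = infsum (q (js n) j) K * measure M (\<Union>ss\<in>B. hist_event M J S n js ss)"
    (is "measure M (?A \<inter> ?H) = _")
proof -
  interpret prob_space M
    using chain by (simp add: MTMRC_def)
  define E where "E k = {\<omega> \<in> space M. J (Suc n) \<omega> = j \<and> sojourn S (Suc n) \<omega> = k} \<inter> ?H" for k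
  have [measurable]: "?H \<in> sets M"
    using B(1) MTMRC_sets_hist_event[OF chain] by blast
  have [measurable]: "J (Suc n) \<in> M \<rightarrow>\<^sub>M count_space UNIV"
    using chain by (simp add: MTMRC_def)
  note MTMRC_measurable_sojourn[OF chain, measurable]
  have "E k \<in> sets M" for k
    unfolding E_def by measurable
  moreover have "countable K"
    using K countable_NatVec by (rule countable_subset)
  ultimately have "((\<lambda>k. measure M (E k)) has_sum measure M (\<Union>k\<in>K. E k)) K"
    by (intro has_sum_measure_disjoint_UN) (auto simp: disjoint_family_on_def E_def)
  moreover have "(\<Union>k\<in>K. E k) = ?A \<inter> ?H"
    by (auto simp: E_def)
  ultimately have "((\<lambda>k. measure M (E k)) has_sum measure M (?A \<inter> ?H)) K"
    by simp
  then have sum: "((\<lambda>k. q (js n) j k * measure M ?H) has_sum measure M (?A \<inter> ?H)) K"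
    using MTMRC_kernel_UN_hist_event[OF chain B] by (simp add: E_def)
  show ?thesis
  proof (cases "measure M ?H = 0")
    case True
    have "measure M (?A \<inter> ?H) \<le> measure M ?H"
      by (intro finite_measure_mono) auto
    then have "measure M (?A \<inter> ?H) = 0"
      using True measure_nonneg[of M "?A \<inter> ?H"] by linarith
    with True show ?thesis
      by simp
  next
    case False
    then show ?thesis
      using sum by (simp add: has_sum_cmult_left_iff infsumI)
  qed
qed

theorem corollary2:
  fixes M :: "'w measure" and d s u v :: nat
    and J :: "nat \<Rightarrow> 'w \<Rightarrow> nat" and S :: "nat \<Rightarrow> 'w \<Rightarrow> (nat \<Rightarrow> nat)"
    and q :: "nat \<Rightarrow> nat \<Rightarrow> (nat \<Rightarrow> nat) \<Rightarrow> real"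
  assumes "MTMRC M d s J S q"
    and "1 \<le> u" and "u < v" and "v \<le> d"
  shows "MRC_kernel M J (Sy S u v) (qy d q u v)"
  unfolding MRC_kernel_def
proof (intro allI)
  fix n j k js ts
  let ?Hy = "hist_event M J (Sy S u v) n js ts"
  define B where "B = (\<lambda>\<omega>. restrict (\<lambda>m. S m \<omega>) {..n}) ` ?Hy"
  define K where "K = {kv \<in> NatVec d. kv u * kv v = k}"
  have Hy: "?Hy = (\<Union>ss\<in>B. hist_event M J S n js ss)"
    unfolding B_def by (rule hist_event_eq_UN_hist_event_finer) (rule Sy_cong)
  have "S m \<omega> \<in> NatVec d" if "\<omega> \<in> space M" for m \<omega>
    using assms(1) that by (simp add: MTMRC_def)
  then have histories: "B \<subseteq> PiE {..n} (\<lambda>_. NatVec d)"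
    by (auto simp: B_def hist_event_def)
  have B: "countable B" "B \<subseteq> extensional {..n}"
    using countable_subset[OF histories countable_PiE] histories
    by (auto simp: countable_NatVec PiE_def)
  have increment: "{\<omega> \<in> space M. J (Suc n) \<omega> = j \<and> Sy S u v (Suc n) \<omega> - Sy S u v n \<omega> = k}
      = {\<omega> \<in> space M. J (Suc n) \<omega> = j \<and> sojourn S (Suc n) \<omega> \<in> K}"
    using MTMRC_sojourn_in_NatVec[OF assms(1)] by (auto simp: K_def Sy_Suc_diff)
  show "measure M ({\<omega> \<in> space M. J (Suc n) \<omega> = j \<and> Sy S u v (Suc n) \<omega> - Sy S u v n \<omega> = k} \<inter> ?Hy)
      = qy d q u v (js n) j k * measure M ?Hy"
    unfolding Hy increment qy_def K_def[symmetric]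
    by (rule MTMRC_kernel_UN_hist_event_increment_set[OF assms(1) B]) (simp add: K_def)
qed

end
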